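(* Let $\mathcal{G}=\langle V,E,T\rangle$ be an OMVPP $k$-grabbing pawn game and let $c$ be an initial configuration from which Player 1 wins. Then Player 1 has a strategy such that, for every Player 2 strategy, the resulting play reaches a vertex of $T$ within $|V|\cdot(k+1)$ rounds.
   Context: A pawn game with $d$ pawns consists of a finite directed graph $(V,E)$, a target set $T\subseteq V$, and sets $V_1,\dots,V_d\subseteq V$ with $V_1\cup\dots\cup V_d=V$ (possibly overlapping: OMVPP), where Pawn $j$ owns $V_j$. Player 1 moves the token from $v$ (along an edge) iff he controls at least one pawn owning $v$; otherwise Player 2 moves. In the $k$-grabbing mechanism, configurations are $\langle v,P,r\rangle$ with $v$ the token position, $P\subseteq[d]$ the pawns controlled by Player 1, and $r\in\{0,\dots,k\}$ the number of remaining grabs; initially $r=k$. A round consists of one move of the token followed by Player 1's option to grab: either do nothing or, if $r>0$, take a pawn $j\notin P$, moving to $P\cup\{j\}$ and $r-1$; grabbed pawns stay with Player 1 forever and Player 2 never grabs. Player 1 wins a play iff it visits $T$; Player 1 wins from a configuration if he has a strategy winning against all Player 2 strategies. *)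

theory Defs
  imports Main
begin

text \<open>Configurations: token position, set of pawns controlled by Player 1, remaining grabs.\<close>
type_synonym 'v config = "'v \<times> nat set \<times> nat"

text \<open>An OMVPP pawn game with pawns 1..d; Own j is the set of vertices owned by pawn j
 (owner sets may overlap).  As usual for such games, every vertex has a successor.\<close>
definition pawn_game :: "'v set \<Rightarrow> ('v \<times> 'v) set \<Rightarrow> 'v set \<Rightarrow> nat \<Rightarrow> (nat \<Rightarrow> 'v set) \<Rightarrow> bool" where
  "pawn_game V E T d Own \<longleftrightarrow> finite V \<and> E \<subseteq> V \<times> V \<and> T \<subseteq> V
     \<and> (\<forall>v\<in>V. \<exists>u. (v, u) \<in> E) \<and> (\<Union>j\<in>{1..d}. Own j) = V"

definition p1_moves :: "(nat \<Rightarrow> 'v set) \<Rightarrow> nat set \<Rightarrow> 'v \<Rightarrow> bool" where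
  "p1_moves Own P v \<longleftrightarrow> (\<exists>j\<in>P. v \<in> Own j)"

text \<open>A Player 1 strategy: a move function on histories (lists of round-start
 configurations) and a grab function depending on the history and the new token position.\<close>
type_synonym 'v strat1 = "('v config list \<Rightarrow> 'v) \<times> ('v config list \<Rightarrow> 'v \<Rightarrow> nat option)"
type_synonym 'v strat2 = "'v config list \<Rightarrow> 'v"

definition valid1 :: "('v \<times> 'v) set \<Rightarrow> nat \<Rightarrow> (nat \<Rightarrow> 'v set) \<Rightarrow> 'v strat1 \<Rightarrow> bool" where
  "valid1 E d Own \<sigma> \<longleftrightarrow>
     (\<forall>h v P r. h \<noteq> [] \<longrightarrow> last h = (v, P, r) \<longrightarrow>
        (p1_moves Own P v \<longrightarrow> (v, fst \<sigma> h) \<in> E) \<and>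
        (\<forall>u j. snd \<sigma> h u = Some j \<longrightarrow> r > 0 \<and> j \<in> {1..d} \<and> j \<notin> P))"

definition valid2 :: "('v \<times> 'v) set \<Rightarrow> (nat \<Rightarrow> 'v set) \<Rightarrow> 'v strat2 \<Rightarrow> bool" where
  "valid2 E Own \<tau> \<longleftrightarrow>
     (\<forall>h v P r. h \<noteq> [] \<longrightarrow> last h = (v, P, r) \<longrightarrow>
        (\<not> p1_moves Own P v \<longrightarrow> (v, \<tau> h) \<in> E))"

definition next_config :: "(nat \<Rightarrow> 'v set) \<Rightarrow> 'v strat1 \<Rightarrow> 'v strat2 \<Rightarrow> 'v config list \<Rightarrow> 'v config" where
  "next_config Own \<sigma> \<tau> h =
     (case last h of (v, P, r) \<Rightarrow>
        let u = (if p1_moves Own P v then fst \<sigma> h else \<tau> h) in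
        (case snd \<sigma> h u of None \<Rightarrow> (u, P, r) | Some j \<Rightarrow> (u, insert j P, r - 1)))"

fun hist :: "(nat \<Rightarrow> 'v set) \<Rightarrow> 'v strat1 \<Rightarrow> 'v strat2 \<Rightarrow> 'v config \<Rightarrow> nat \<Rightarrow> 'v config list" where
  "hist Own \<sigma> \<tau> c 0 = [c]"
| "hist Own \<sigma> \<tau> c (Suc n) = (let h = hist Own \<sigma> \<tau> c n in h @ [next_config Own \<sigma> \<tau> h])"

definition play :: "(nat \<Rightarrow> 'v set) \<Rightarrow> 'v strat1 \<Rightarrow> 'v strat2 \<Rightarrow> 'v config \<Rightarrow> nat \<Rightarrow> 'v config" where
  "play Own \<sigma> \<tau> c n = last (hist Own \<sigma> \<tau> c n)"

definition p1_wins :: "('v \<times> 'v) set \<Rightarrow> 'v set \<Rightarrow> nat \<Rightarrow> (nat \<Rightarrow> 'v set) \<Rightarrow> 'v config \<Rightarrow> bool" where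
  "p1_wins E T d Own c \<longleftrightarrow>
     (\<exists>\<sigma>. valid1 E d Own \<sigma> \<and>
        (\<forall>\<tau>. valid2 E Own \<tau> \<longrightarrow> (\<exists>n. fst (play Own \<sigma> \<tau> c n) \<in> T)))"

end

theory Submission
  imports Defs
begin

text \<open>
  Player 1's winning region is the attractor of the configurations on \<open>T\<close>: outside it,
  Player 2 can keep the play outside forever, so every configuration won by Player 1 lies in
  it, and the attractor strategy reaches \<open>T\<close> within the rank of the start configuration,
  i.e. the least \<open>i\<close> with the configuration in the \<open>i\<close>-th attractor level.
  Grabbing only decreases the number \<open>r\<close> of remaining grabs, so the attractor layer with
  \<open>r\<close> grabs left depends on itself and on the layer with \<open>r - 1\<close> grabs. Once that lower layer
  is stable, the slice of vertices with a fixed pawn set \<open>P\<close> and \<open>r\<close> grabs is an increasing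
  chain of subsets of \<open>V\<close> which, after one stationary step, stays stationary; hence it is
  stable \<open>|V|\<close> iterations later. By induction on \<open>r\<close>, a configuration with \<open>r\<close> grabs left
  has rank at most \<open>|V| (r + 1)\<close>.
\<close>

definition some_else :: "('a \<Rightarrow> bool) \<Rightarrow> 'a \<Rightarrow> 'a" where
  "some_else A y = (if \<exists>x. A x then SOME x. A x else y)"

lemma some_else_satisfies: "\<exists>x. A x \<Longrightarrow> A (some_else A y)"
  unfolding some_else_def using someI_ex[of A] by simp

lemma some_else_preserves: "(\<And>x. A x \<Longrightarrow> Q x) \<Longrightarrow> Q y \<Longrightarrow> Q (some_else A y)"
  unfolding some_else_def using someI_ex[of A] by simp

lemma chain_stationary_after_card:
  fixes L :: "nat \<Rightarrow> 'a set"
  assumes mono: "\<And>i. L i \<subseteq> L (Suc i)" and bounded: "\<And>i. L i \<subseteq> V" and "finite V"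
    and persists: "\<And>i. a \<le> i \<Longrightarrow> L (Suc i) = L i \<Longrightarrow> L (Suc (Suc i)) = L (Suc i)"
    and "a + card V \<le> i"
  shows "L i = L (a + card V)"
proof -
  have stationary: "L j = L i" if "a \<le> i" "L (Suc i) = L i" "i \<le> j" for i j
  proof -
    have step: "L (Suc j) = L j" if "i \<le> j" for j
      using that by (induction j rule: dec_induct) (use \<open>a \<le> i\<close> \<open>L (Suc i) = L i\<close> persists in auto)
    from \<open>i \<le> j\<close> show ?thesis
      by (induction j rule: dec_induct) (use step in auto)
  qed
  have "\<exists>j \<le> card V. L (Suc (a + j)) = L (a + j)"
  proof (rule ccontr)
    assume "\<not> ?thesis"
    then have strict: "L (a + j) \<subset> L (Suc (a + j))" if "j \<le> card V" for j
      using mono that by blast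
    have grows: "j \<le> card (L (a + j))" if "j \<le> Suc (card V)" for j
      using that
    proof (induction j)
      case (Suc j)
      have "card (L (a + j)) < card (L (a + Suc j))"
        using psubset_card_mono[OF finite_subset[OF bounded \<open>finite V\<close>] strict[of j]] Suc.prems
        by simp
      then show ?case using Suc by simp
    qed simp
    show False
      using grows[of "Suc (card V)"] card_mono[OF \<open>finite V\<close> bounded, of "Suc (a + card V)"] by simp
  qed
  then obtain j where "j \<le> card V" "L (Suc (a + j)) = L (a + j)" by blast
  then show ?thesis
    using stationary[of "a + j" i] stationary[of "a + j" "a + card V"] \<open>a + card V \<le> i\<close> by simp
qed

lemma hist_nonempty: "hist Own \<sigma> \<tau> c n \<noteq> []"
  by (cases n) (auto simp: Let_def)

lemma play_Suc: "play Own \<sigma> \<tau> c (Suc n) = next_config Own \<sigma> \<tau> (hist Own \<sigma> \<tau> c n)"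
  by (simp add: play_def Let_def)

lemma next_config_last:
  assumes "last h = (v, P, r)" and "u = (if p1_moves Own P v then fst \<sigma> h else \<tau> h)"
  shows "next_config Own \<sigma> \<tau> h =
           (case snd \<sigma> h u of None \<Rightarrow> (u, P, r) | Some j \<Rightarrow> (u, insert j P, r - 1))"
  unfolding assms(2) by (simp add: next_config_def Let_def assms(1))

locale grabbing_game =
  fixes V :: "'v set" and E :: "('v \<times> 'v) set" and T :: "'v set"
    and d :: nat and Own :: "nat \<Rightarrow> 'v set"
  assumes pawn_game: "pawn_game V E T d Own"
begin

lemma finite_V: "finite V" and edges_V: "E \<subseteq> V \<times> V" and target_V: "T \<subseteq> V"
  using pawn_game unfolding pawn_game_def by simp_all

definition legal_grab :: "nat set \<Rightarrow> nat \<Rightarrow> nat \<Rightarrow> bool" where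
  "legal_grab P r j \<longleftrightarrow> 0 < r \<and> j \<in> {1..d} \<and> j \<notin> P"

definition grab_into :: "'v config set \<Rightarrow> 'v \<Rightarrow> nat set \<Rightarrow> nat \<Rightarrow> bool" where
  "grab_into S u P r \<longleftrightarrow>
     (u, P, r) \<in> S \<or> (\<exists>j. legal_grab P r j \<and> (u, insert j P, r - 1) \<in> S)"

definition grab_choice :: "'v config set \<Rightarrow> 'v \<Rightarrow> nat set \<Rightarrow> nat \<Rightarrow> nat option" where
  "grab_choice S u P r =
     (if \<exists>j. legal_grab P r j \<and> (u, insert j P, r - 1) \<in> S
      then Some (SOME j. legal_grab P r j \<and> (u, insert j P, r - 1) \<in> S) else None)"

lemma grab_choice_legal: "grab_choice S u P r = Some j \<Longrightarrow> legal_grab P r j"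
  unfolding grab_choice_def
  using someI_ex[of "\<lambda>j. legal_grab P r j \<and> (u, insert j P, r - 1) \<in> S"]
  by (auto split: if_splits)

lemma grab_choice_into:
  assumes "grab_into S u P r"
  shows "(case grab_choice S u P r of None \<Rightarrow> (u, P, r) | Some j \<Rightarrow> (u, insert j P, r - 1)) \<in> S"
  using assms someI_ex[of "\<lambda>j. legal_grab P r j \<and> (u, insert j P, r - 1) \<in> S"]
  unfolding grab_into_def grab_choice_def by auto

definition cpre :: "'v config set \<Rightarrow> 'v config set" where
  "cpre S = {(v, P, r). v \<in> V \<and>
     (if p1_moves Own P v then \<exists>u. (v, u) \<in> E \<and> grab_into S u P r
      else \<forall>u. (v, u) \<in> E \<longrightarrow> grab_into S u P r)}"

lemma cpre_mono_slice:
  assumes "\<And>u. grab_into S u P r \<Longrightarrow> grab_into S' u P r" and "(v, P, r) \<in> cpre S"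
  shows "(v, P, r) \<in> cpre S'"
  using assms unfolding cpre_def by (auto split: if_splits)

fun attr :: "nat \<Rightarrow> 'v config set" where
  "attr 0 = {c. fst c \<in> T}"
| "attr (Suc i) = attr i \<union> cpre (attr i)"

definition win_region :: "'v config set" where
  "win_region = (\<Union>i. attr i)"

lemma attr_mono: "i \<le> j \<Longrightarrow> attr i \<subseteq> attr j"
  by (induction j rule: dec_induct) auto

lemma attr_V: "c \<in> attr i \<Longrightarrow> fst c \<in> V"
  by (induction i arbitrary: c) (use target_V in \<open>auto simp: cpre_def\<close>)

lemma attr_slice_bound_step:
  assumes lower: "\<And>P' v i. 0 < r \<Longrightarrow> (v, P', r - 1) \<in> attr i \<Longrightarrow> (v, P', r - 1) \<in> attr (card V * r)"
    and "(v, P, r) \<in> attr i"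
  shows "(v, P, r) \<in> attr (card V * Suc r)"
proof -
  define a where "a = card V * r"
  define L where "L i = {v. (v, P, r) \<in> attr i}" for i
  have persists: "L (Suc (Suc i)) = L (Suc i)" if "a \<le> i" "L (Suc i) = L i" for i
  proof -
    \<comment> \<open>a grab leads into the layer with \<open>r - 1\<close> grabs, which no longer grows after \<open>a\<close>\<close>
    have down: "grab_into (attr (Suc i)) u P r \<Longrightarrow> grab_into (attr i) u P r" for u
      using that lower attr_mono[of a i] unfolding grab_into_def legal_grab_def L_def a_def
      by blast
    have up: "grab_into (attr i) u P r \<Longrightarrow> grab_into (attr (Suc i)) u P r" for u
      unfolding grab_into_def by auto
    have "(v, P, r) \<in> cpre (attr (Suc i)) \<longleftrightarrow> (v, P, r) \<in> cpre (attr i)" for v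
      using cpre_mono_slice[of "attr i" P r "attr (Suc i)"] cpre_mono_slice[of "attr (Suc i)" P r "attr i"]
        down up by blast
    then show ?thesis using that(2) unfolding L_def by auto
  qed
  have "L (max i (a + card V)) = L (a + card V)"
  proof (rule chain_stationary_after_card[where V = V])
    show "L j \<subseteq> L (Suc j)" "L j \<subseteq> V" for j
      unfolding L_def by (auto dest: attr_V)
  qed (use finite_V persists in auto)
  moreover have "v \<in> L (max i (a + card V))"
    using assms(2) attr_mono[of i "max i (a + card V)"] unfolding L_def by auto
  moreover have "a + card V = card V * Suc r" unfolding a_def by simp
  ultimately show ?thesis unfolding L_def by simp
qed

lemma attr_slice_bound: "(v, P, r) \<in> attr i \<Longrightarrow> (v, P, r) \<in> attr (card V * Suc r)"
  by (induction r arbitrary: v P i) (rule attr_slice_bound_step; simp)+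

lemma win_region_attr_bound: "(v, P, r) \<in> win_region \<Longrightarrow> (v, P, r) \<in> attr (card V * Suc r)"
  unfolding win_region_def using attr_slice_bound by blast

lemma cpre_win_region: "cpre win_region \<subseteq> win_region"
proof
  fix c assume "c \<in> cpre win_region"
  then obtain v P r where c: "c = (v, P, r)" "(v, P, r) \<in> cpre win_region"
    by (cases c) auto
  have "attr (card V * Suc (r - 1)) \<subseteq> attr (card V * Suc r)"
    by (rule attr_mono) simp
  then have "grab_into win_region u P r \<Longrightarrow> grab_into (attr (card V * Suc r)) u P r" for u
    using win_region_attr_bound unfolding grab_into_def by blast
  then have "c \<in> cpre (attr (card V * Suc r))"
    using cpre_mono_slice c by blast
  then have "c \<in> attr (Suc (card V * Suc r))" by simp
  then show "c \<in> win_region" unfolding win_region_def by blast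
qed

definition rank :: "'v config \<Rightarrow> nat" where
  "rank c = (LEAST i. c \<in> attr i)"

lemma rank_step:
  assumes "c \<in> attr (Suc n)" and "c \<notin> attr 0"
  obtains m where "rank c = Suc m" "m \<le> n" "c \<in> cpre (attr m)"
proof -
  have in_rank: "c \<in> attr (rank c)"
    unfolding rank_def by (rule LeastI) (rule assms(1))
  have "rank c \<le> Suc n"
    unfolding rank_def by (rule Least_le) (rule assms(1))
  obtain m where m: "rank c = Suc m"
    using in_rank assms(2) by (cases "rank c") auto
  have "c \<notin> attr m"
    using not_less_Least[of m "\<lambda>i. c \<in> attr i"] m unfolding rank_def by simp
  then have "c \<in> cpre (attr m)" using in_rank m by simp
  then show ?thesis using that m \<open>rank c \<le> Suc n\<close> by simp
qed

text \<open>The attractor strategy aims one attractor level below the rank of the current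
  configuration; the fallback \<open>\<sigma>0\<close> only supplies legal moves where no such aim exists (for
  instance from histories ending in a pawn set that is not a subset of \<open>{1..d}\<close>).\<close>
definition attr_strategy :: "'v strat1 \<Rightarrow> 'v strat1" where
  "attr_strategy \<sigma>0 =
     (\<lambda>h. case last h of (v, P, r) \<Rightarrow>
        some_else (\<lambda>u. (v, u) \<in> E \<and> grab_into (attr (rank (last h) - 1)) u P r) (fst \<sigma>0 h),
      \<lambda>h u. case last h of (v, P, r) \<Rightarrow> grab_choice (attr (rank (last h) - 1)) u P r)"

lemma valid_attr_strategy:
  assumes "valid1 E d Own \<sigma>0"
  shows "valid1 E d Own (attr_strategy \<sigma>0)"
  unfolding valid1_def
proof (intro allI impI)
  fix h and v :: 'v and P :: "nat set" and r :: nat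
  assume h: "h \<noteq> []" "last h = (v, P, r)"
  have "(v, fst (attr_strategy \<sigma>0) h) \<in> E" if "p1_moves Own P v"
    using assms h that unfolding valid1_def attr_strategy_def
    by (auto intro: some_else_preserves[where Q = "\<lambda>u. (v, u) \<in> E"])
  moreover have "legal_grab P r j" if "snd (attr_strategy \<sigma>0) h u = Some j" for u j
    using h that grab_choice_legal unfolding attr_strategy_def by auto
  ultimately show "(p1_moves Own P v \<longrightarrow> (v, fst (attr_strategy \<sigma>0) h) \<in> E) \<and>
      (\<forall>u j. snd (attr_strategy \<sigma>0) h u = Some j \<longrightarrow> 0 < r \<and> j \<in> {1..d} \<and> j \<notin> P)"
    unfolding legal_grab_def by blast
qed

lemma attr_strategy_step:
  assumes "valid2 E Own \<tau>" and "h \<noteq> []" and "last h \<in> attr (Suc n)" and "last h \<notin> attr 0"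
  shows "next_config Own (attr_strategy \<sigma>0) \<tau> h \<in> attr n"
proof -
  obtain v P r where c: "last h = (v, P, r)" by (cases "last h") auto
  obtain m where m: "rank (last h) = Suc m" "m \<le> n" "last h \<in> cpre (attr m)"
    using rank_step assms(3,4) .
  have move: "fst (attr_strategy \<sigma>0) h =
      some_else (\<lambda>u. (v, u) \<in> E \<and> grab_into (attr m) u P r) (fst \<sigma>0 h)"
    and grab: "snd (attr_strategy \<sigma>0) h = (\<lambda>u. grab_choice (attr m) u P r)"
    using m(1) by (simp_all add: attr_strategy_def c)
  define u where "u = (if p1_moves Own P v then fst (attr_strategy \<sigma>0) h else \<tau> h)"
  have "grab_into (attr m) u P r"
  proof (cases "p1_moves Own P v")
    case True
    then have aim: "\<exists>u. (v, u) \<in> E \<and> grab_into (attr m) u P r"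
      using m(3) c by (simp add: cpre_def)
    show ?thesis
      using some_else_satisfies[OF aim, of "fst \<sigma>0 h"] True unfolding u_def move by simp
  next
    case False
    then have "(v, \<tau> h) \<in> E" using assms(1,2) c by (simp add: valid2_def)
    then show ?thesis using False m(3) c by (simp add: cpre_def u_def)
  qed
  then have "next_config Own (attr_strategy \<sigma>0) \<tau> h \<in> attr m"
    using grab_choice_into unfolding next_config_last[where \<sigma> = "attr_strategy \<sigma>0" and \<tau> = \<tau>, OF c u_def] grab by simp
  then show ?thesis using attr_mono[OF m(2)] by blast
qed

lemma attr_strategy_reaches_target:
  assumes "valid2 E Own \<tau>" and "play Own (attr_strategy \<sigma>0) \<tau> c t \<in> attr n"
  shows "\<exists>i \<le> n. fst (play Own (attr_strategy \<sigma>0) \<tau> c (t + i)) \<in> T"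
  using assms(2)
proof (induction n arbitrary: t)
  case 0
  then show ?case by (intro exI[of _ 0]) simp
next
  case (Suc n)
  show ?case
  proof (cases "play Own (attr_strategy \<sigma>0) \<tau> c t \<in> attr 0")
    case True
    then show ?thesis by (intro exI[of _ 0]) simp
  next
    case False
    have "play Own (attr_strategy \<sigma>0) \<tau> c (Suc t) \<in> attr n"
      unfolding play_Suc
      by (rule attr_strategy_step[OF assms(1) hist_nonempty])
         (use Suc.prems False in \<open>simp_all add: play_def\<close>)
    then obtain i where "i \<le> n" "fst (play Own (attr_strategy \<sigma>0) \<tau> c (Suc t + i)) \<in> T"
      using Suc.IH by blast
    then show ?thesis by (intro exI[of _ "Suc i"]) simp
  qed
qed

definition spoiler :: "'v strat2 \<Rightarrow> 'v strat2" where
  "spoiler \<tau>0 h = (case last h of (v, P, r) \<Rightarrow>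
     some_else (\<lambda>u. (v, u) \<in> E \<and> \<not> grab_into win_region u P r) (\<tau>0 h))"

lemma valid_spoiler:
  assumes "valid2 E Own \<tau>0"
  shows "valid2 E Own (spoiler \<tau>0)"
  unfolding valid2_def
proof (intro allI impI)
  fix h and v :: 'v and P :: "nat set" and r :: nat
  assume "h \<noteq> []" "last h = (v, P, r)" "\<not> p1_moves Own P v"
  then show "(v, spoiler \<tau>0 h) \<in> E"
    using assms unfolding valid2_def spoiler_def
    by (auto intro: some_else_preserves[where Q = "\<lambda>u. (v, u) \<in> E"])
qed

lemma spoiler_move_escapes:
  assumes \<sigma>: "valid1 E d Own \<sigma>" and \<tau>0: "valid2 E Own \<tau>0"
    and h: "h \<noteq> []" "last h = (v, P, r)" and lost: "(v, P, r) \<notin> win_region"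
  shows "\<not> grab_into win_region (if p1_moves Own P v then fst \<sigma> h else spoiler \<tau>0 h) P r"
proof (cases "p1_moves Own P v")
  case True
  then have "(v, fst \<sigma> h) \<in> E" using \<sigma> h by (simp add: valid1_def)
  then have "(v, P, r) \<in> cpre win_region" if "grab_into win_region (fst \<sigma> h) P r"
    using edges_V True that by (auto simp: cpre_def)
  then show ?thesis using lost cpre_win_region True by auto
next
  case False
  show ?thesis
  proof (cases "\<exists>u. (v, u) \<in> E \<and> \<not> grab_into win_region u P r")
    case True
    have "spoiler \<tau>0 h = some_else (\<lambda>u. (v, u) \<in> E \<and> \<not> grab_into win_region u P r) (\<tau>0 h)"
      by (simp add: spoiler_def h(2))
    then show ?thesis
      using some_else_satisfies[OF True, of "\<tau>0 h"] False by simp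
  next
    case no_escape: False
    have "(v, \<tau>0 h) \<in> E" using \<tau>0 h False by (simp add: valid2_def)
    then have "v \<in> V" using edges_V by blast
    then have "(v, P, r) \<in> cpre win_region"
      using no_escape False by (simp add: cpre_def)
    then show ?thesis using lost cpre_win_region by blast
  qed
qed

lemma spoiler_step:
  assumes \<sigma>: "valid1 E d Own \<sigma>" and \<tau>0: "valid2 E Own \<tau>0"
    and "h \<noteq> []" and "last h \<notin> win_region"
  shows "next_config Own \<sigma> (spoiler \<tau>0) h \<notin> win_region"
proof -
  obtain v P r where c: "last h = (v, P, r)" by (cases "last h") auto
  define u where "u = (if p1_moves Own P v then fst \<sigma> h else spoiler \<tau>0 h)"
  have "\<not> grab_into win_region u P r"
    unfolding u_def using spoiler_move_escapes[OF \<sigma> \<tau>0 \<open>h \<noteq> []\<close> c] assms(4) c by simp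
  moreover have "legal_grab P r j" if "snd \<sigma> h u = Some j" for j
    using \<sigma> \<open>h \<noteq> []\<close> c that by (simp add: valid1_def legal_grab_def)
  ultimately show ?thesis
    unfolding next_config_last[where \<sigma> = \<sigma> and \<tau> = "spoiler \<tau>0", OF c u_def] grab_into_def
    by (cases "snd \<sigma> h u") auto
qed

lemma spoiler_avoids_win_region:
  assumes "valid1 E d Own \<sigma>" and "valid2 E Own \<tau>0" and "c \<notin> win_region"
  shows "play Own \<sigma> (spoiler \<tau>0) c n \<notin> win_region"
proof (induction n)
  case 0
  then show ?case using \<open>c \<notin> win_region\<close> by (simp add: play_def)
next
  case (Suc n)
  then show ?case
    unfolding play_Suc using spoiler_step[OF assms(1,2) hist_nonempty] by (simp add: play_def)
qed

lemma p1_wins_in_win_region: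
  assumes "p1_wins E T d Own c" and "valid2 E Own \<tau>0"
  shows "c \<in> win_region"
proof (rule ccontr)
  assume "c \<notin> win_region"
  obtain \<sigma> n where "valid1 E d Own \<sigma>" "fst (play Own \<sigma> (spoiler \<tau>0) c n) \<in> T"
    using assms valid_spoiler unfolding p1_wins_def by blast
  moreover have "attr 0 \<subseteq> win_region" unfolding win_region_def by blast
  ultimately show False
    using spoiler_avoids_win_region[OF _ assms(2) \<open>c \<notin> win_region\<close>, of \<sigma> n] by auto
qed

end

theorem lemma34:
  fixes V :: "'v set" and E :: "('v \<times> 'v) set" and T :: "'v set"
    and d k :: nat and Own :: "nat \<Rightarrow> 'v set" and v0 :: 'v and P0 :: "nat set"
  assumes "pawn_game V E T d Own"
    and "v0 \<in> V" and "P0 \<subseteq> {1..d}"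
    and "p1_wins E T d Own (v0, P0, k)"
  shows "\<exists>\<sigma>. valid1 E d Own \<sigma> \<and>
           (\<forall>\<tau>. valid2 E Own \<tau> \<longrightarrow>
              (\<exists>n \<le> card V * (k + 1). fst (play Own \<sigma> \<tau> (v0, P0, k) n) \<in> T))"
proof -
  interpret grabbing_game V E T d Own by (rule grabbing_game.intro) (rule assms(1))
  obtain \<sigma>0 where \<sigma>0: "valid1 E d Own \<sigma>0"
    using assms(4) unfolding p1_wins_def by blast
  have "\<exists>n \<le> card V * (k + 1). fst (play Own (attr_strategy \<sigma>0) \<tau> (v0, P0, k) n) \<in> T"
    if \<tau>: "valid2 E Own \<tau>" for \<tau>
  proof -
    have "(v0, P0, k) \<in> win_region"
      using p1_wins_in_win_region[OF assms(4) \<tau>] .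
    then have "play Own (attr_strategy \<sigma>0) \<tau> (v0, P0, k) 0 \<in> attr (card V * (k + 1))"
      using win_region_attr_bound by (simp add: play_def)
    from attr_strategy_reaches_target[OF \<tau> this] show ?thesis by simp
  qed
  then show ?thesis using valid_attr_strategy[OF \<sigma>0] by blast
qed

end
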